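(* Let $k\ge 1$ and $n\ge k+1$ be integers. The minimum of ${\rm dc}(G)$ over all $k$-connected graphs $G$ of order $n$ equals $\min\{n,3k+2\}$. That is, every $k$-connected graph $G$ of order $n$ satisfies ${\rm dc}(G)\ge \min\{n,3k+2\}$, and some $k$-connected graph of order $n$ attains equality.
   Context: All graphs are finite and simple. A detour of a graph is a longest path in it. The detour covering number ${\rm dc}(G)$ is the number of vertices of $G$ that lie in at least one detour. *)

theory Defs
  imports Main
begin

definition graph :: "'a set \<Rightarrow> ('a \<Rightarrow> 'a \<Rightarrow> bool) \<Rightarrow> bool" where
  "graph V E \<longleftrightarrow> finite V \<and> (\<forall>x y. E x y \<longrightarrow> x \<in> V \<and> y \<in> V \<and> x \<noteq> y \<and> E y x)"

text \<open>A path: nonempty list of distinct vertices, consecutive ones adjacent.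
  Its length (number of edges) is length p - 1.\<close>
definition is_path :: "'a set \<Rightarrow> ('a \<Rightarrow> 'a \<Rightarrow> bool) \<Rightarrow> 'a list \<Rightarrow> bool" where
  "is_path V E p \<longleftrightarrow> p \<noteq> [] \<and> distinct p \<and> set p \<subseteq> V \<and>
     (\<forall>i. Suc i < length p \<longrightarrow> E (p ! i) (p ! Suc i))"

definition is_detour :: "'a set \<Rightarrow> ('a \<Rightarrow> 'a \<Rightarrow> bool) \<Rightarrow> 'a list \<Rightarrow> bool" where
  "is_detour V E p \<longleftrightarrow> is_path V E p \<and> (\<forall>q. is_path V E q \<longrightarrow> length q \<le> length p)"

definition dc :: "'a set \<Rightarrow> ('a \<Rightarrow> 'a \<Rightarrow> bool) \<Rightarrow> nat" where
  "dc V E = card {v. \<exists>p. is_detour V E p \<and> v \<in> set p}"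

definition connected_graph :: "'a set \<Rightarrow> ('a \<Rightarrow> 'a \<Rightarrow> bool) \<Rightarrow> bool" where
  "connected_graph V E \<longleftrightarrow>
     (\<forall>u\<in>V. \<forall>v\<in>V. \<exists>p. is_path V E p \<and> hd p = u \<and> last p = v)"

definition del_vertices :: "('a \<Rightarrow> 'a \<Rightarrow> bool) \<Rightarrow> 'a set \<Rightarrow> 'a \<Rightarrow> 'a \<Rightarrow> bool" where
  "del_vertices E S = (\<lambda>x y. E x y \<and> x \<notin> S \<and> y \<notin> S)"

definition k_connected :: "'a set \<Rightarrow> ('a \<Rightarrow> 'a \<Rightarrow> bool) \<Rightarrow> nat \<Rightarrow> bool" where
  "k_connected V E k \<longleftrightarrow> card V \<ge> k + 1 \<and>
     (\<forall>S. S \<subseteq> V \<and> card S < k \<longrightarrow> connected_graph (V - S) (del_vertices E S))"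

end

theory Submission
  imports Defs
begin

(* Let x be a vertex on no detour, p = p_0 ... p_(L-1) a detour, C the component of x in
   G - V(p), and J the set of indices j such that p_j has a neighbour in C. Rerouting p
   through C, and using that every path through x has fewer than L vertices, gives
   2 <= j <= L - 3 for j in J, no two consecutive indices in J, and, whenever j and j + 2
   both lie in J, a single common neighbour of p_j and p_(j+2) in C, different from x.
   Choosing that neighbour for such twinned indices and p_j itself otherwise yields a set
   separating x from p_0 of size at most |{j in J. j + 2 not in J}|, hence at least k by
   k-connectivity. Since J, J + 1 and {j in J. j + 2 not in J} + 2 are disjoint subsets of
   {2, ..., L - 1}, we get L >= 3k + 2.
   The bound is attained by K_n if n <= 3k + 2, and otherwise by K_k joined with k + 1
   disjoint edges and n - 3k - 2 isolated vertices: no path there has three consecutive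
   vertices outside K_k, so detours have 3k + 2 vertices and miss the isolated ones. *)

section \<open>Paths and detours\<close>

lemma is_path_iff:
  "is_path V E p \<longleftrightarrow> p \<noteq> [] \<and> distinct p \<and> set p \<subseteq> V \<and> successively E p"
  by (simp add: is_path_def successively_conv_nth)

lemma is_path_length_le_card:
  assumes "finite V" "is_path V E p"
  shows "length p \<le> card V"
proof -
  have "length p = card (set p)"
    using assms(2) by (simp add: is_path_iff distinct_card)
  also have "\<dots> \<le> card V"
    using assms by (intro card_mono) (auto simp: is_path_iff)
  finally show ?thesis .
qed

lemma detour_exists:
  assumes "finite V" "v \<in> V"
  shows "\<exists>p. is_detour V E p"
proof -
  have "is_path V E [v]"
    using assms(2) by (simp add: is_path_def)
  moreover have "\<forall>q. is_path V E q \<longrightarrow> length q < Suc (card V)"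
    using is_path_length_le_card[OF assms(1)] by (simp add: less_Suc_eq_le)
  ultimately show ?thesis
    unfolding is_detour_def by (rule Lattices_Big.ex_has_greatest_nat)
qed

lemma is_path_append:
  assumes "is_path V E xs" "is_path V E ys" "set xs \<inter> set ys = {}" "E (last xs) (hd ys)"
  shows "is_path V E (xs @ ys)"
  using assms by (auto simp: is_path_iff successively_append_iff)

lemma is_path_take:
  assumes "is_path V E p" "0 < j"
  shows "is_path V E (take j p)"
proof -
  have "successively E (take j p)"
    using assms(1) successively_append_iff[of E "take j p" "drop j p"] by (simp add: is_path_iff)
  thus ?thesis
    using assms by (auto simp: is_path_iff dest: in_set_takeD)
qed

lemma is_path_drop:
  assumes "is_path V E p" "j < length p"
  shows "is_path V E (drop j p)"
proof -
  have "successively E (drop j p)"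
    using assms(1) successively_append_iff[of E "take j p" "drop j p"] by (simp add: is_path_iff)
  thus ?thesis
    using assms by (auto simp: is_path_iff dest: in_set_dropD)
qed

lemma is_path_del_vertices_iff:
  "is_path (V - S) (del_vertices E S) q \<longleftrightarrow> is_path V E q \<and> set q \<inter> S = {}"
proof -
  have "successively (del_vertices E S) q \<longleftrightarrow> successively E q" if "set q \<inter> S = {}"
    using that by (intro successively_cong) (auto simp: del_vertices_def)
  thus ?thesis
    by (auto simp: is_path_iff)
qed

lemma graph_del_vertices:
  assumes "graph V E"
  shows "graph (V - S) (del_vertices E S)"
  using assms by (auto simp: graph_def del_vertices_def)

lemma rtranclp_imp_path:
  assumes "graph V E" "a \<in> V" "E\<^sup>*\<^sup>* a b"
  shows "\<exists>q. is_path V E q \<and> hd q = a \<and> last q = b"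
  using assms(3,2)
proof (induction rule: converse_rtranclp_induct)
  case base
  show ?case
    using base by (intro exI[of _ "[b]"]) (simp add: is_path_def)
next
  case (step a y)
  have "y \<in> V"
    using step.hyps(1) assms(1) by (auto simp: graph_def)
  then obtain q where q: "is_path V E q" "hd q = y" "last q = b"
    using step.IH by blast
  show ?case
  proof (cases "a \<in> set q")
    case True
    then obtain i where i: "i < length q" "q ! i = a"
      by (auto simp: in_set_conv_nth)
    thus ?thesis
      using q by (intro exI[of _ "drop i q"]) (simp add: is_path_drop hd_drop_conv_nth last_drop)
  next
    case False
    have "is_path V E ([a] @ q)"
      using False q step.prems step.hyps(1) by (intro is_path_append) (auto simp: is_path_def)
    thus ?thesis
      using q by (intro exI[of _ "a # q"]) (simp add: is_path_def)
  qed
qed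

lemma walk_first_entry:
  assumes "successively E q" "q \<noteq> []" "hd q \<notin> P" "last q \<in> P"
  shows "\<exists>ys a b zs. q = ys @ a # b # zs \<and> (del_vertices E P)\<^sup>*\<^sup>* (hd q) a \<and> E a b \<and> b \<in> P"
  using assms
proof (induction q)
  case Nil
  then show ?case by simp
next
  case (Cons a r)
  have "r \<noteq> []"
    using Cons.prems by auto
  then obtain b r' where r: "r = b # r'"
    by (cases r) auto
  have ab: "E a b"
    using Cons.prems(1) r by simp
  show ?case
  proof (cases "b \<in> P")
    case True
    thus ?thesis
      using ab r by (intro exI[of _ "[]"]) auto
  next
    case False
    then obtain ys a' b' zs where IH: "r = ys @ a' # b' # zs" "(del_vertices E P)\<^sup>*\<^sup>* b a'"
        "E a' b'" "b' \<in> P"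
      using Cons.IH Cons.prems r by (auto simp: successively_Cons)
    have "del_vertices E P a b"
      using ab False Cons.prems(3) by (simp add: del_vertices_def)
    hence "(del_vertices E P)\<^sup>*\<^sup>* a a'"
      using IH(2) by (rule converse_rtranclp_into_rtranclp)
    thus ?thesis
      using IH by (intro exI[of _ "a # ys"]) auto
  qed
qed

lemma detour_length_le_dc:
  assumes "graph V E" "is_detour V E p"
  shows "length p \<le> dc V E"
proof -
  have "length p = card (set p)"
    using assms(2) by (simp add: is_detour_def is_path_def distinct_card)
  also have "\<dots> \<le> dc V E"
    unfolding dc_def using assms
    by (intro card_mono) (auto intro: finite_subset simp: graph_def is_detour_def is_path_def)
  finally show ?thesis .
qed

lemma dc_eq_length_if_detour_covers:
  assumes "is_detour V E p" "\<And>q. is_detour V E q \<Longrightarrow> set q \<subseteq> set p"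
  shows "dc V E = length p"
proof -
  have "{v. \<exists>q. is_detour V E q \<and> v \<in> set q} = set p"
    using assms by blast
  thus ?thesis
    using assms(1) by (simp add: dc_def is_detour_def is_path_def distinct_card)
qed

section \<open>A vertex on no detour\<close>

lemma image_Diff_eq_if_shift:
  fixes s :: "nat \<Rightarrow> nat"
  assumes "finite B" and shift: "\<And>j. j \<in> A \<Longrightarrow> s j \<in> B \<and> j < s j \<and> f (s j) = f j"
  shows "f ` (B - A) = f ` B"
proof -
  have "f j \<in> f ` (B - A)" if "j \<in> B" for j
    using that
  proof (induction "Max B - j" arbitrary: j rule: less_induct)
    case less
    show ?case
    proof (cases "j \<in> A")
      case True
      hence "s j \<in> B" "j < s j" "f (s j) = f j"
        using shift by auto
      moreover have "Max B - s j < Max B - j"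
        using calculation(1,2) Max_ge[OF assms(1)] by (meson diff_less_mono2 order_less_le_trans)
      ultimately show ?thesis
        using less.hyps by metis
    qed (use less.prems in blast)
  qed
  thus ?thesis
    by blast
qed

lemma card_shifts_le:
  fixes B :: "nat set"
  assumes no_Suc: "\<And>j. j \<in> B \<Longrightarrow> Suc j \<notin> B" and range: "\<And>j. j \<in> B \<Longrightarrow> a \<le> j \<and> j + 2 < b"
  shows "2 * card B + card {j \<in> B. j + 2 \<notin> B} \<le> b - a"
proof -
  let ?B' = "{j \<in> B. j + 2 \<notin> B}"
  have "B \<subseteq> {..<b}"
    using range by force
  hence finite: "finite B" "finite ?B'"
    by (auto intro: finite_subset)
  have disjoint: "B \<inter> Suc ` B = {}" "B \<inter> (\<lambda>j. j + 2) ` ?B' = {}" "Suc ` B \<inter> (\<lambda>j. j + 2) ` ?B' = {}"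
    using no_Suc by force+
  have "2 * card B + card ?B' = card B + card (Suc ` B) + card ((\<lambda>j. j + 2) ` ?B')"
    by (simp add: card_image inj_on_def)
  also have "\<dots> = card (B \<union> Suc ` B \<union> (\<lambda>j. j + 2) ` ?B')"
    using finite disjoint by (simp add: card_Un_disjoint Int_Un_distrib2)
  also have "\<dots> \<le> card {a..<b}"
    using range by (intro card_mono) force+
  finally show ?thesis
    by simp
qed

locale vertex_off_detours =
  fixes V :: "'a set" and E :: "'a \<Rightarrow> 'a \<Rightarrow> bool" and p :: "'a list" and x :: 'a
  assumes graph: "graph V E"
    and detour: "is_detour V E p"
    and x_in_V: "x \<in> V"
    and x_off_detours: "\<And>q. is_detour V E q \<Longrightarrow> x \<notin> set q"
begin

lemma is_path_p: "is_path V E p"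
  using detour by (simp add: is_detour_def)

lemma distinct_p: "distinct p"
  using is_path_p by (simp add: is_path_def)

lemma x_notin_p: "x \<notin> set p"
  using detour x_off_detours by blast

lemma adj_sym: "E u v \<Longrightarrow> E v u"
  using graph by (simp add: graph_def)

lemma path_length_le: "is_path V E q \<Longrightarrow> length q \<le> length p"
  using detour by (simp add: is_detour_def)

lemma path_through_x_shorter:
  assumes "is_path V E q" "x \<in> set q"
  shows "length q < length p"
  using assms x_off_detours path_length_le by (force simp: is_detour_def)

definition x_component :: "'a set" where
  "x_component = {y. (del_vertices E (set p))\<^sup>*\<^sup>* x y}"

lemma x_in_x_component: "x \<in> x_component"
  by (simp add: x_component_def)

lemma x_component_subset: "x_component \<subseteq> V - set p"
proof
  fix y assume "y \<in> x_component"
  hence "(del_vertices E (set p))\<^sup>*\<^sup>* x y"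
    by (simp add: x_component_def)
  thus "y \<in> V - set p"
    by (induction rule: rtranclp_induct)
      (use x_in_V x_notin_p graph in \<open>auto simp: graph_def del_vertices_def\<close>)
qed

lemma x_component_path:
  assumes "c \<in> x_component" "c' \<in> x_component"
  shows "\<exists>q. is_path V E q \<and> set q \<inter> set p = {} \<and> hd q = c \<and> last q = c'"
proof -
  let ?R = "del_vertices E (set p)"
  have "symp ?R"
    using adj_sym by (auto simp: symp_def del_vertices_def)
  moreover have "?R\<^sup>*\<^sup>* x c"
    using assms(1) by (simp add: x_component_def)
  ultimately have "?R\<^sup>*\<^sup>* c x"
    by (blast intro: sympD[OF symp_rtranclp])
  hence "?R\<^sup>*\<^sup>* c c'"
    using assms(2) by (simp add: x_component_def)
  moreover have "c \<in> V - set p"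
    using assms(1) x_component_subset by blast
  ultimately obtain q where "is_path (V - set p) ?R q" "hd q = c" "last q = c'"
    using rtranclp_imp_path[OF graph_del_vertices[OF graph]] by blast
  thus ?thesis
    using is_path_del_vertices_iff by blast
qed

lemma reroute_segment_length:
  assumes q: "is_path V E q" "set q \<inter> set p = {}"
    and ij: "i < j" "j < length p" and edges: "E (p ! i) (hd q)" "E (last q) (p ! j)"
  shows "i + length q < j" and "x \<in> set q \<Longrightarrow> i + length q + 1 < j"
proof -
  let ?r = "take (Suc i) p @ q @ drop j p"
  have tail: "is_path V E (q @ drop j p)"
    using q ij edges by (intro is_path_append is_path_drop is_path_p)
      (auto simp: hd_drop_conv_nth dest: in_set_dropD)
  have "set (take (Suc i) p) \<inter> set (drop j p) = {}"
    using set_take_disj_set_drop_if_distinct[OF distinct_p] ij(1) by simp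
  hence "set (take (Suc i) p) \<inter> set (q @ drop j p) = {}"
    using q(2) by (auto dest: in_set_takeD)
  moreover have "last (take (Suc i) p) = p ! i" "hd (q @ drop j p) = hd q"
    using ij q(1) by (auto simp: take_Suc_conv_app_nth is_path_def)
  ultimately have path: "is_path V E ?r"
    using edges(1) by (intro is_path_append[OF is_path_take[OF is_path_p] tail]) auto
  have length: "length ?r = Suc i + length q + (length p - j)"
    using ij by simp
  show "i + length q < j"
    using path_length_le[OF path] length ij by linarith
  show "i + length q + 1 < j" if "x \<in> set q"
    using path_through_x_shorter[OF path] that length ij by simp
qed

lemma reroute_prefix_length:
  assumes q: "is_path V E q" "set q \<inter> set p = {}" "x \<in> set q"
    and j: "j < length p" "E (last q) (p ! j)"
  shows "length q < j"
proof -
  have path: "is_path V E (q @ drop j p)"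
    using q j by (intro is_path_append is_path_drop is_path_p)
      (auto simp: hd_drop_conv_nth dest: in_set_dropD)
  show ?thesis
    using path_through_x_shorter[OF path] q(3) j(1) by simp
qed

lemma reroute_suffix_length:
  assumes q: "is_path V E q" "set q \<inter> set p = {}" "x \<in> set q"
    and j: "j < length p" "E (p ! j) (hd q)"
  shows "j + length q + 1 < length p"
proof -
  have path: "is_path V E (take (Suc j) p @ q)"
    using q j by (intro is_path_append is_path_take is_path_p)
      (auto simp: take_Suc_conv_app_nth dest: in_set_takeD)
  show ?thesis
    using path_through_x_shorter[OF path] q(3) j(1) by simp
qed

definition attachments :: "nat set" where
  "attachments = {j. j < length p \<and> (\<exists>c\<in>x_component. E (p ! j) c)}"

lemma finite_attachments: "finite attachments"
  by (simp add: attachments_def)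

lemma attachment_ge_2:
  assumes "j \<in> attachments"
  shows "2 \<le> j"
proof -
  obtain c where c: "c \<in> x_component" "E (p ! j) c" and j: "j < length p"
    using assms by (auto simp: attachments_def)
  obtain q where q: "is_path V E q" "set q \<inter> set p = {}" "hd q = x" "last q = c"
    using x_component_path[OF x_in_x_component c(1)] by blast
  have "x \<in> set q"
    using q(1,3) by (auto simp: is_path_def)
  hence "length q < j"
    using reroute_prefix_length q j c(2) adj_sym by simp
  thus ?thesis
    using q(1) by (cases q) (auto simp: is_path_def)
qed

lemma attachment_less:
  assumes "j \<in> attachments"
  shows "j + 2 < length p"
proof -
  obtain c where c: "c \<in> x_component" "E (p ! j) c" and j: "j < length p"
    using assms by (auto simp: attachments_def)
  obtain q where q: "is_path V E q" "set q \<inter> set p = {}" "hd q = c" "last q = x"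
    using x_component_path[OF c(1) x_in_x_component] by blast
  have "x \<in> set q"
    using q(1,4) by (auto simp: is_path_def)
  hence "j + length q + 1 < length p"
    using reroute_suffix_length q j c(2) by simp
  thus ?thesis
    using q(1) by (cases q) (auto simp: is_path_def)
qed

lemma attachment_pair:
  assumes "j \<in> attachments" "l \<in> attachments" "j < l"
    and c: "c \<in> x_component" "E (p ! j) c" and c': "c' \<in> x_component" "E (p ! l) c'"
  obtains q where "is_path V E q" "set q \<inter> set p = {}" "hd q = c" "last q = c'" "j + length q < l"
    "x \<in> set q \<Longrightarrow> j + length q + 1 < l"
proof -
  obtain q where q: "is_path V E q" "set q \<inter> set p = {}" "hd q = c" "last q = c'"
    using x_component_path[OF c(1) c'(1)] by blast
  have "l < length p"
    using assms(2) by (simp add: attachments_def)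
  thus ?thesis
    using that q reroute_segment_length[OF q(1,2) assms(3)] c(2) c'(2) adj_sym by simp
qed

lemma Suc_notin_attachments:
  assumes "j \<in> attachments"
  shows "Suc j \<notin> attachments"
proof
  assume "Suc j \<in> attachments"
  then obtain c c' where "c \<in> x_component" "E (p ! j) c" "c' \<in> x_component" "E (p ! Suc j) c'"
    using assms by (auto simp: attachments_def)
  then obtain q where "is_path V E q" "j + length q < Suc j"
    using attachment_pair[OF assms \<open>Suc j \<in> attachments\<close>] by blast
  thus False
    by (cases q) (auto simp: is_path_def)
qed

lemma attachment_twins:
  assumes "j \<in> attachments" "j + 2 \<in> attachments"
    and "c \<in> x_component" "E (p ! j) c" "c' \<in> x_component" "E (p ! (j + 2)) c'"
  shows "c = c'" and "c \<noteq> x"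
proof -
  obtain q where q: "is_path V E q" "hd q = c" "last q = c'" "j + length q < j + 2"
      "x \<in> set q \<Longrightarrow> j + length q + 1 < j + 2"
    using attachment_pair[OF assms(1,2) _ assms(3-6)] by auto
  have "length q = 1"
    using q(1,4) by (cases q) (auto simp: is_path_def)
  then obtain a where "q = [a]"
    by (cases q) auto
  thus "c = c'" and "c \<noteq> x"
    using q by auto
qed

definition twinned :: "nat \<Rightarrow> bool" where
  "twinned j \<longleftrightarrow> j + 2 \<in> attachments \<or> (2 \<le> j \<and> j - 2 \<in> attachments)"

text \<open>For twinned \<open>j\<close> the neighbour of \<open>p ! j\<close> in the component is unique
  (\<open>twinned_neighbours\<close>), so the definite description is well defined.\<close>

definition anchor :: "nat \<Rightarrow> 'a" where
  "anchor j = (if twinned j then THE c. c \<in> x_component \<and> E (p ! j) c else p ! j)"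

lemma twinned_neighbours:
  assumes "j \<in> attachments" "twinned j"
  obtains c' where "\<And>c. c \<in> x_component \<Longrightarrow> E (p ! j) c \<Longrightarrow> c = c' \<and> c \<noteq> x"
proof (cases "j + 2 \<in> attachments")
  case True
  then obtain c' where "c' \<in> x_component" "E (p ! (j + 2)) c'"
    by (auto simp: attachments_def)
  thus ?thesis
    using that attachment_twins[OF assms(1) True] by blast
next
  case False
  hence i: "j - 2 \<in> attachments" "j - 2 + 2 = j"
    using assms(2) by (auto simp: twinned_def)
  then obtain c' where c': "c' \<in> x_component" "E (p ! (j - 2)) c'"
    by (auto simp: attachments_def)
  have "c' = c \<and> c' \<noteq> x" if "c \<in> x_component" "E (p ! j) c" for c
    using attachment_twins[of "j - 2", OF i(1) _ c'] i(2) assms(1) that by simp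
  thus ?thesis
    using that by blast
qed

lemma twinned_anchor:
  assumes "j \<in> attachments" "twinned j"
  shows "anchor j \<in> x_component" "E (p ! j) (anchor j)" "anchor j \<noteq> x"
    and "\<And>c. c \<in> x_component \<Longrightarrow> E (p ! j) c \<Longrightarrow> c = anchor j"
proof -
  obtain c' where c': "\<And>c. c \<in> x_component \<Longrightarrow> E (p ! j) c \<Longrightarrow> c = c' \<and> c \<noteq> x"
    using twinned_neighbours[OF assms] by blast
  obtain c0 where c0: "c0 \<in> x_component" "E (p ! j) c0"
    using assms(1) by (auto simp: attachments_def)
  have unique: "c = c0" if "c \<in> x_component" "E (p ! j) c" for c
    using c'[OF that] c'[OF c0] by simp
  have "c0 \<noteq> x"
    using c'[OF c0] by blast
  have "(THE c. c \<in> x_component \<and> E (p ! j) c) = c0"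
    using c0 unique by (intro the_equality) blast+
  hence "anchor j = c0"
    using assms(2) by (simp add: anchor_def)
  thus "anchor j \<in> x_component" "E (p ! j) (anchor j)" "anchor j \<noteq> x"
    using c0 \<open>c0 \<noteq> x\<close> by simp_all
  show "\<And>c. c \<in> x_component \<Longrightarrow> E (p ! j) c \<Longrightarrow> c = anchor j"
    using unique \<open>anchor j = c0\<close> by blast
qed

lemma anchor_plus_2:
  assumes "j \<in> attachments" "j + 2 \<in> attachments"
  shows "anchor (j + 2) = anchor j"
proof -
  have "twinned j" "twinned (j + 2)"
    using assms by (auto simp: twinned_def)
  thus ?thesis
    using twinned_anchor assms attachment_twins(1)[OF assms] by metis
qed

lemma anchors_subset: "anchor ` attachments \<subseteq> V - {x, p ! 0}"
proof
  fix a assume "a \<in> anchor ` attachments"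
  then obtain j where j: "j \<in> attachments" "a = anchor j"
    by blast
  have p0: "p ! 0 \<in> set p"
    using is_path_p by (auto simp: is_path_def)
  show "a \<in> V - {x, p ! 0}"
  proof (cases "twinned j")
    case True
    thus ?thesis
      using twinned_anchor(1,3)[OF j(1) True] j(2) x_component_subset p0 by auto
  next
    case False
    have "j < length p" "0 < j" "0 < length p"
      using j(1) attachment_ge_2[OF j(1)] by (auto simp: attachments_def)
    moreover have "set p \<subseteq> V"
      using is_path_p by (simp add: is_path_def)
    ultimately show ?thesis
      using False j(2) x_notin_p distinct_p by (auto simp: anchor_def nth_eq_iff_index_eq)
  qed
qed

lemma anchors_separate:
  assumes q: "is_path V E q" "hd q = x" "last q = p ! 0"
  shows "set q \<inter> anchor ` attachments \<noteq> {}"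
proof -
  have "last q \<in> set p"
    using q(3) is_path_p by (auto simp: is_path_def)
  then obtain ys a b zs where split: "q = ys @ a # b # zs" "(del_vertices E (set p))\<^sup>*\<^sup>* x a"
      "E a b" "b \<in> set p"
    using walk_first_entry[of E q "set p"] q x_notin_p by (auto simp: is_path_iff)
  obtain j where j: "j < length p" "b = p ! j"
    using split(4) by (auto simp: in_set_conv_nth)
  have a: "a \<in> x_component"
    using split(2) by (simp add: x_component_def)
  hence "j \<in> attachments"
    using j split(3) adj_sym by (auto simp: attachments_def)
  moreover have "anchor j \<in> {a, b}"
  proof (cases "twinned j")
    case True
    have "E (p ! j) a"
      using split(3) adj_sym j(2) by simp
    thus ?thesis
      using twinned_anchor(4)[OF \<open>j \<in> attachments\<close> True a] by simp
  qed (simp add: anchor_def j(2))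
  ultimately show ?thesis
    using split(1) by auto
qed

lemma card_anchors_le: "card (anchor ` attachments) \<le> card {j \<in> attachments. j + 2 \<notin> attachments}"
proof -
  have "anchor ` attachments = anchor ` (attachments - {j \<in> attachments. j + 2 \<in> attachments})"
    by (rule image_Diff_eq_if_shift[OF finite_attachments, where s = "\<lambda>j. j + 2", symmetric])
      (auto simp: anchor_plus_2[simplified])
  also have "attachments - {j \<in> attachments. j + 2 \<in> attachments}
      = {j \<in> attachments. j + 2 \<notin> attachments}"
    by blast
  finally show ?thesis
    using finite_attachments by (simp add: card_image_le)
qed

theorem length_ge_if_k_connected:
  assumes "k_connected V E k" "1 \<le> k"
  shows "3 * k + 2 \<le> length p"
proof -
  let ?S = "anchor ` attachments"
  have "k \<le> card ?S"
  proof (rule ccontr)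
    assume "\<not> k \<le> card ?S"
    hence "connected_graph (V - ?S) (del_vertices E ?S)"
      using assms(1) anchors_subset by (auto simp: k_connected_def)
    moreover have "x \<in> V - ?S" "p ! 0 \<in> V - ?S"
      using anchors_subset x_in_V is_path_p by (auto simp: is_path_def)
    ultimately obtain q where "is_path (V - ?S) (del_vertices E ?S) q" "hd q = x" "last q = p ! 0"
      unfolding connected_graph_def by blast
    thus False
      using anchors_separate is_path_del_vertices_iff by blast
  qed
  also have "\<dots> \<le> card {j \<in> attachments. j + 2 \<notin> attachments}"
    by (rule card_anchors_le)
  finally have "3 * k \<le> 2 * card attachments + card {j \<in> attachments. j + 2 \<notin> attachments}"
    using card_mono[OF finite_attachments, of "{j \<in> attachments. j + 2 \<notin> attachments}"] by auto
  also have "\<dots> \<le> length p - 2"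
    by (rule card_shifts_le) (simp_all add: Suc_notin_attachments attachment_ge_2 attachment_less[simplified])
  finally show ?thesis
    using assms(2) by linarith
qed

end

lemma dc_ge_min_card_if_k_connected:
  assumes "graph V E" "k_connected V E k" "1 \<le> k"
  shows "min (card V) (3 * k + 2) \<le> dc V E"
proof (cases "\<forall>x\<in>V. \<exists>q. is_detour V E q \<and> x \<in> set q")
  case True
  hence "{v. \<exists>q. is_detour V E q \<and> v \<in> set q} = V"
    by (auto simp: is_detour_def is_path_def)
  thus ?thesis
    by (simp add: dc_def)
next
  case False
  then obtain x where x: "x \<in> V" "\<And>q. is_detour V E q \<Longrightarrow> x \<notin> set q"
    by blast
  moreover obtain p where p: "is_detour V E p"
    using detour_exists[of V x E] x(1) assms(1) by (auto simp: graph_def)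
  ultimately interpret vertex_off_detours V E p x
    using assms(1) by unfold_locales
  have "3 * k + 2 \<le> length p"
    using length_ge_if_k_connected assms(2,3) .
  thus ?thesis
    using detour_length_le_dc[OF assms(1) p] by linarith
qed

section \<open>Graphs attaining the bound\<close>

lemma k_connected_if_universal_vertices:
  assumes "graph V E" "K \<subseteq> V" "k \<le> card K" "k + 1 \<le> card V"
    and universal: "\<And>u v. u \<in> K \<Longrightarrow> v \<in> V \<Longrightarrow> u \<noteq> v \<Longrightarrow> E u v"
  shows "k_connected V E k"
  unfolding k_connected_def connected_graph_def
proof (intro conjI assms(4) allI impI ballI)
  fix S u v assume S: "S \<subseteq> V \<and> card S < k" and uv: "u \<in> V - S" "v \<in> V - S"
  have "finite K"
    using assms(1,2) by (auto simp: graph_def intro: finite_subset)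
  hence "\<not> K \<subseteq> S"
    using S assms(3) card_mono[of S K] assms(1) by (auto simp: graph_def intro: finite_subset)
  then obtain w where w: "w \<in> K" "w \<notin> S"
    by blast
  have adj_sym: "E y z" if "E z y" for y z
    using that assms(1) by (simp add: graph_def)
  let ?G = "del_vertices E S"
  have w_edge: "?G w y" "?G y w" if "y \<in> V - S" "y \<noteq> w" for y
    using universal[OF w(1)] that w adj_sym assms(2) by (auto simp: del_vertices_def)
  have "w \<in> V - S"
    using w assms(2) by blast
  consider "u = v" | "u \<noteq> v" "u = w \<or> v = w" | "u \<noteq> v" "u \<noteq> w" "v \<noteq> w"
    by blast
  thus "\<exists>q. is_path (V - S) ?G q \<and> hd q = u \<and> last q = v"
  proof cases
    case 1
    thus ?thesis
      using uv by (intro exI[of _ "[u]"]) (simp add: is_path_def)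
  next
    case 2
    hence "?G u v"
      using w_edge uv by auto
    thus ?thesis
      using 2 uv by (intro exI[of _ "[u, v]"]) (simp add: is_path_iff)
  next
    case 3
    thus ?thesis
      using uv w_edge \<open>w \<in> V - S\<close> by (intro exI[of _ "[u, w, v]"]) (auto simp: is_path_iff)
  qed
qed

definition complete_adj :: "nat \<Rightarrow> nat \<Rightarrow> nat \<Rightarrow> bool" where
  "complete_adj n u v \<longleftrightarrow> u < n \<and> v < n \<and> u \<noteq> v"

lemma graph_complete: "graph {..<n} (complete_adj n)"
  by (auto simp: graph_def complete_adj_def)

lemma k_connected_complete:
  assumes "k + 1 \<le> n"
  shows "k_connected {..<n} (complete_adj n) k"
  using assms
  by (intro k_connected_if_universal_vertices[OF graph_complete, of "{..<n}"])
    (auto simp: complete_adj_def)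

lemma dc_complete:
  assumes "0 < n"
  shows "dc {..<n} (complete_adj n) = n"
proof -
  have "is_path {..<n} (complete_adj n) [0..<n]"
    using assms by (auto simp: is_path_def complete_adj_def)
  hence detour: "is_detour {..<n} (complete_adj n) [0..<n]"
    using is_path_length_le_card[of "{..<n}" "complete_adj n"] by (simp add: is_detour_def)
  have "set q \<subseteq> set [0..<n]" if "is_detour {..<n} (complete_adj n) q" for q
    using that by (auto simp: is_detour_def is_path_def)
  thus ?thesis
    using dc_eq_length_if_detour_covers[OF detour] by simp
qed

definition hits_every_triple :: "'a set \<Rightarrow> 'a list \<Rightarrow> bool" where
  "hits_every_triple K q \<longleftrightarrow> (\<forall>ys a b c zs. q = ys @ [a, b, c] @ zs \<longrightarrow> a \<in> K \<or> b \<in> K \<or> c \<in> K)"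

lemma hits_every_triple_appendD:
  assumes "hits_every_triple K (xs @ ys)"
  shows "hits_every_triple K xs" "hits_every_triple K ys"
proof -
  show "hits_every_triple K xs"
    using assms unfolding hits_every_triple_def by (metis append.assoc)
  show "hits_every_triple K ys"
    using assms unfolding hits_every_triple_def by (metis append.assoc)
qed

lemma hits_every_triple_rev:
  assumes "hits_every_triple K q"
  shows "hits_every_triple K (rev q)"
  unfolding hits_every_triple_def
proof (intro allI impI)
  fix ys a b c zs assume "rev q = ys @ [a, b, c] @ zs"
  hence "q = rev zs @ [c, b, a] @ rev ys"
    by (metis append.assoc rev_append rev_rev_ident rev.simps append_Cons append_Nil)
  thus "a \<in> K \<or> b \<in> K \<or> c \<in> K"
    using assms unfolding hits_every_triple_def by blast
qed

lemma hits_every_triple_split: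
  assumes "hits_every_triple K q" "3 \<le> length q"
  obtains ys zs where "q = ys @ zs" "length ys \<le> 2" "zs \<noteq> []" "hd zs \<in> K"
proof -
  obtain a b c r where q: "q = [] @ [a, b, c] @ r"
    using assms(2) by (auto simp: numeral_3_eq_3 Suc_le_length_iff)
  hence "a \<in> K \<or> b \<in> K \<or> c \<in> K"
    using assms(1) unfolding hits_every_triple_def by blast
  thus ?thesis
    using that[of "[]" q] that[of "[a]" "b # c # r"] that[of "[a, b]" "c # r"] q by auto
qed

lemma length_le_3_card_if_hd_in:
  assumes "hits_every_triple K q" "distinct q" "q = [] \<or> hd q \<in> K"
  shows "length q \<le> 3 * card (set q \<inter> K)"
  using assms
proof (induction "length q" arbitrary: q rule: less_induct)
  case less
  show ?case
  proof (cases q)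
    case Nil
    thus ?thesis by simp
  next
    case (Cons a r)
    have a: "a \<in> set q \<inter> K"
      using less.prems(3) Cons by simp
    show ?thesis
    proof (cases "3 \<le> length r")
      case False
      have "1 \<le> card (set q \<inter> K)"
        using a by (metis One_nat_def Suc_leI card_gt_0_iff empty_iff finite_Int finite_set)
      thus ?thesis
        using False Cons by simp
    next
      case True
      have "hits_every_triple K r"
        using less.prems(1) hits_every_triple_appendD(2)[of K "[a]" r] Cons by simp
      then obtain ys zs where split: "r = ys @ zs" "length ys \<le> 2" "zs \<noteq> []" "hd zs \<in> K"
        using True hits_every_triple_split by blast
      have "hits_every_triple K zs"
        using less.prems(1) hits_every_triple_appendD(2)[of K "a # ys" zs] Cons split(1) by simp
      moreover have "distinct zs" "a \<notin> set zs"
        using less.prems(2) Cons split(1) by auto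
      ultimately have "length zs \<le> 3 * card (set zs \<inter> K)"
        using less.hyps[of zs] Cons split by simp
      moreover have "card (set zs \<inter> K) < card (set q \<inter> K)"
        using a \<open>a \<notin> set zs\<close> Cons split(1) by (intro psubset_card_mono) auto
      ultimately show ?thesis
        using Cons split(1,2) by simp
    qed
  qed
qed

lemma length_le_3_card_plus_2:
  assumes "hits_every_triple K q" "distinct q"
  shows "length q \<le> 3 * card (set q \<inter> K) + 2"
proof (cases "3 \<le> length q")
  case True
  then obtain ys zs where split: "q = ys @ zs" "length ys \<le> 2" "zs \<noteq> []" "hd zs \<in> K"
    using assms(1) hits_every_triple_split by blast
  have "length zs \<le> 3 * card (set zs \<inter> K)"
    using assms split hits_every_triple_appendD(2)[of K ys zs]
    by (intro length_le_3_card_if_hd_in) auto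
  also have "\<dots> \<le> 3 * card (set q \<inter> K)"
    using split(1) by (intro mult_le_mono2 card_mono) auto
  finally show ?thesis
    using split(1,2) by simp
qed simp

lemma length_le_3_card_plus_1:
  assumes "hits_every_triple K (xs @ w # ys)" "distinct (xs @ w # ys)"
    and "xs = [] \<or> last xs \<in> K" "ys = [] \<or> hd ys \<in> K"
  shows "length (xs @ w # ys) \<le> 3 * card (set (xs @ w # ys) \<inter> K) + 1"
proof -
  have "hits_every_triple K (rev xs)" "hits_every_triple K ys"
    using hits_every_triple_appendD[OF assms(1)] hits_every_triple_appendD(2)[of K "[w]" ys]
      hits_every_triple_rev by auto
  moreover have "rev xs = [] \<or> hd (rev xs) \<in> K"
    using assms(3) by (simp add: hd_rev)
  ultimately have "length xs \<le> 3 * card (set xs \<inter> K)" "length ys \<le> 3 * card (set ys \<inter> K)"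
    using length_le_3_card_if_hd_in[of K "rev xs"] length_le_3_card_if_hd_in[of K ys] assms(2,4)
    by auto
  moreover have "card (set xs \<inter> K) + card (set ys \<inter> K) \<le> card (set (xs @ w # ys) \<inter> K)"
  proof -
    have "card (set xs \<inter> K) + card (set ys \<inter> K) = card ((set xs \<inter> K) \<union> (set ys \<inter> K))"
      using assms(2) by (intro card_Un_disjoint[symmetric]) auto
    also have "\<dots> \<le> card (set (xs @ w # ys) \<inter> K)"
      by (intro card_mono) auto
    finally show ?thesis .
  qed
  ultimately show ?thesis
    by simp
qed

lemma div_2_eq_distinct_imp_eq:
  fixes a b c :: nat
  assumes "a div 2 = b div 2" "b div 2 = c div 2" "a \<noteq> b" "b \<noteq> c"
  shows "a = c"
proof -
  have "a mod 2 \<noteq> b mod 2" "b mod 2 \<noteq> c mod 2"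
    using assms by (metis div_mult_mod_eq)+
  hence "a mod 2 = c mod 2"
    by (auto simp: mod2_eq_if split: if_splits)
  thus ?thesis
    using assms(1,2) by (metis div_mult_mod_eq)
qed

text \<open>The join of \<open>K\<^sub>k\<close> on the vertices below \<open>k\<close> with the disjoint edges
  \<open>{k + 2i, k + 2i + 1}\<close> for \<open>i \<le> k\<close> and the isolated vertices \<open>3k + 2, \<dots>, n - 1\<close>.\<close>

definition extremal_adj :: "nat \<Rightarrow> nat \<Rightarrow> nat \<Rightarrow> nat \<Rightarrow> bool" where
  "extremal_adj k n u v \<longleftrightarrow> u < n \<and> v < n \<and> u \<noteq> v \<and>
     (u < k \<or> v < k \<or> (u < 3 * k + 2 \<and> v < 3 * k + 2 \<and> (u - k) div 2 = (v - k) div 2))"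

lemma graph_extremal: "graph {..<n} (extremal_adj k n)"
  by (auto simp: graph_def extremal_adj_def)

lemma k_connected_extremal:
  assumes "k + 1 \<le> n"
  shows "k_connected {..<n} (extremal_adj k n) k"
  using assms
  by (intro k_connected_if_universal_vertices[OF graph_extremal, of "{..<k}"])
    (auto simp: extremal_adj_def)

lemma extremal_path_hits_every_triple:
  assumes "is_path {..<n} (extremal_adj k n) q"
  shows "hits_every_triple {..<k} q"
  unfolding hits_every_triple_def
proof (intro allI impI)
  fix ys a b c zs assume q: "q = ys @ [a, b, c] @ zs"
  have "extremal_adj k n a b" "extremal_adj k n b c" "a \<noteq> c"
    using assms q by (auto simp: is_path_iff successively_append_iff)
  thus "a \<in> {..<k} \<or> b \<in> {..<k} \<or> c \<in> {..<k}"
    using div_2_eq_distinct_imp_eq[of "a - k" "b - k" "c - k"] by (auto simp: extremal_adj_def)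
qed

lemma extremal_path_length:
  assumes "is_path {..<n} (extremal_adj k n) q"
  shows "length q \<le> 3 * k + 2"
proof -
  have "length q \<le> 3 * card (set q \<inter> {..<k}) + 2"
    using assms extremal_path_hits_every_triple
    by (intro length_le_3_card_plus_2) (auto simp: is_path_def)
  also have "card (set q \<inter> {..<k}) \<le> k"
    using card_mono[of "{..<k}" "set q \<inter> {..<k}"] by simp
  finally show ?thesis
    by simp
qed

text \<open>The Hamiltonian path \<open>k, k + 1, 0, k + 2, k + 3, 1, \<dots>, 3k, 3k + 1\<close> of the
  first \<open>3k + 2\<close> vertices of the extremal graph.\<close>

definition zigzag :: "nat \<Rightarrow> nat \<Rightarrow> nat" where
  "zigzag k i = (if i mod 3 = 2 then i div 3 else k + 2 * (i div 3) + i mod 3)"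

lemma zigzag_cases:
  obtains "i mod 3 = 2" "zigzag k i = i div 3" "3 * zigzag k i + 2 = i"
  | "i mod 3 < 2" "zigzag k i = k + 2 * (i div 3) + i mod 3" "3 * (i div 3) + i mod 3 = i"
proof (cases "i mod 3 = 2")
  case True
  thus ?thesis
    using that(1) div_mult_mod_eq[of i 3] by (simp add: zigzag_def)
next
  case False
  hence "i mod 3 < 2"
    by simp
  thus ?thesis
    using that(2) False div_mult_mod_eq[of i 3] by (simp add: zigzag_def)
qed

lemma zigzag_less:
  assumes "i < 3 * k + 2"
  shows "zigzag k i < 3 * k + 2"
  using assms by (cases rule: zigzag_cases[where i = i and k = k]) linarith+

lemma zigzag_less_k_iff:
  assumes "i < 3 * k + 2"
  shows "zigzag k i < k \<longleftrightarrow> i mod 3 = 2"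
  using assms by (cases rule: zigzag_cases[where i = i and k = k]) linarith+

lemma inj_on_zigzag: "inj_on (zigzag k) {..<3 * k + 2}"
proof (rule inj_onI)
  fix i j assume ij: "i \<in> {..<3 * k + 2}" "j \<in> {..<3 * k + 2}" and eq: "zigzag k i = zigzag k j"
  have "i mod 3 = 2 \<longleftrightarrow> j mod 3 = 2"
    using zigzag_less_k_iff[of i k] zigzag_less_k_iff[of j k] ij eq by simp
  hence "i div 3 = j div 3 \<and> i mod 3 = j mod 3"
  proof (cases "i mod 3 = 2")
    case False
    hence "2 * (i div 3) + i mod 3 = 2 * (j div 3) + j mod 3" "i mod 3 < 2" "j mod 3 < 2"
      using eq \<open>i mod 3 = 2 \<longleftrightarrow> j mod 3 = 2\<close> by (auto simp: zigzag_def)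
    moreover have "a = b \<and> r = s" if "2 * a + r = 2 * b + s" "r < 2" "s < 2" for a b r s :: nat
      using that by presburger
    ultimately show ?thesis
      by blast
  qed (use eq in \<open>simp add: zigzag_def\<close>)
  thus "i = j"
    by (metis div_mult_mod_eq)
qed

lemma zigzag_edge:
  assumes "Suc i < 3 * k + 2" "3 * k + 2 \<le> n"
  shows "extremal_adj k n (zigzag k i) (zigzag k (Suc i))"
proof -
  have "zigzag k i \<noteq> zigzag k (Suc i)"
    using inj_onD[OF inj_on_zigzag[of k], of i "Suc i"] assms(1) by auto
  moreover have "zigzag k i < 3 * k + 2" "zigzag k (Suc i) < 3 * k + 2"
    using zigzag_less assms(1) by simp_all
  moreover have "zigzag k i < k \<or> zigzag k (Suc i) < k \<or>
      (zigzag k i - k) div 2 = (zigzag k (Suc i) - k) div 2"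
  proof (cases "i mod 3 = 0")
    case True
    hence "Suc i mod 3 = 1" "Suc i div 3 = i div 3"
      by presburger+
    thus ?thesis
      using True by (simp add: zigzag_def)
  next
    case False
    hence "i mod 3 = 2 \<or> Suc i mod 3 = 2"
      by presburger
    thus ?thesis
      using zigzag_less_k_iff assms(1) by auto
  qed
  ultimately show ?thesis
    using assms(2) by (auto simp: extremal_adj_def)
qed

lemma extremal_path_length_if_isolated:
  assumes q: "is_path {..<n} (extremal_adj k n) q" and w: "w \<in> set q" "3 * k + 2 \<le> w"
  shows "length q \<le> 3 * k + 1"
proof -
  obtain xs ys where split: "q = xs @ w # ys"
    using split_list[OF w(1)] by blast
  have "successively (extremal_adj k n) (xs @ w # ys)"
    using q split by (simp add: is_path_iff)
  hence "xs = [] \<or> extremal_adj k n (last xs) w" "ys = [] \<or> extremal_adj k n w (hd ys)"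
    by (auto simp: successively_append_iff successively_Cons)
  hence "xs = [] \<or> last xs \<in> {..<k}" "ys = [] \<or> hd ys \<in> {..<k}"
    using w(2) by (auto simp: extremal_adj_def)
  moreover have "hits_every_triple {..<k} (xs @ w # ys)" "distinct (xs @ w # ys)"
    using extremal_path_hits_every_triple[OF q] q split by (simp_all add: is_path_def)
  ultimately have "length q \<le> 3 * card (set q \<inter> {..<k}) + 1"
    unfolding split by (rule length_le_3_card_plus_1[rotated 2])
  also have "card (set q \<inter> {..<k}) \<le> k"
    using card_mono[of "{..<k}" "set q \<inter> {..<k}"] by simp
  finally show ?thesis
    by simp
qed

lemma dc_extremal:
  assumes "3 * k + 2 \<le> n"
  shows "dc {..<n} (extremal_adj k n) = 3 * k + 2"
proof -
  let ?p = "map (zigzag k) [0..<3 * k + 2]"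
  have "zigzag k ` {..<3 * k + 2} = {..<3 * k + 2}"
    using zigzag_less inj_on_zigzag by (intro endo_inj_surj) auto
  hence "set ?p = {..<3 * k + 2}"
    by (simp add: atLeast0LessThan del: upt_Suc)
  moreover have "is_path {..<n} (extremal_adj k n) ?p"
    using assms inj_on_zigzag[of k] zigzag_edge[OF _ assms] \<open>set ?p = _\<close>
    by (auto simp: is_path_def distinct_map atLeast0LessThan simp del: upt_Suc)
  ultimately have detour: "is_detour {..<n} (extremal_adj k n) ?p"
    using extremal_path_length by (simp add: is_detour_def)
  have "set q \<subseteq> set ?p" if "is_detour {..<n} (extremal_adj k n) q" for q
  proof
    fix w assume "w \<in> set q"
    have "3 * k + 2 \<le> length q"
      using that detour by (auto simp: is_detour_def)
    hence "w < 3 * k + 2"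
      using extremal_path_length_if_isolated[of n k q w] that \<open>w \<in> set q\<close>
      by (force simp: is_detour_def)
    thus "w \<in> set ?p"
      using \<open>set ?p = _\<close> by simp
  qed
  thus ?thesis
    using dc_eq_length_if_detour_covers[OF detour] by simp
qed

theorem theorem8:
  fixes k n :: nat
  assumes "k \<ge> 1" and "n \<ge> k + 1"
  shows "(\<forall>(V :: 'a set) E. graph V E \<and> card V = n \<and> k_connected V E k
            \<longrightarrow> dc V E \<ge> min n (3 * k + 2))
       \<and> (\<exists>(V :: nat set) E. graph V E \<and> card V = n \<and> k_connected V E k
            \<and> dc V E = min n (3 * k + 2))"
proof (intro conjI allI impI)
  fix V :: "'a set" and E
  assume "graph V E \<and> card V = n \<and> k_connected V E k"
  thus "dc V E \<ge> min n (3 * k + 2)"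
    using dc_ge_min_card_if_k_connected assms(1) by blast
next
  show "\<exists>(V :: nat set) E. graph V E \<and> card V = n \<and> k_connected V E k
      \<and> dc V E = min n (3 * k + 2)"
  proof (cases "n \<le> 3 * k + 2")
    case True
    thus ?thesis
      using graph_complete k_connected_complete[OF assms(2)] dc_complete[of n] assms
      by (intro exI[of _ "{..<n}"] exI[of _ "complete_adj n"]) simp
  next
    case False
    thus ?thesis
      using graph_extremal k_connected_extremal[OF assms(2)] dc_extremal[of k n]
      by (intro exI[of _ "{..<n}"] exI[of _ "extremal_adj k n"]) simp
  qed
qed

end
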